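(* Let $X$, $Y$ be $d$-dimensional normal pseudomanifolds such that $Y$ is obtained from $X$ by starring a new vertex in a facet of $X$. Then $Y$ is a stacked $d$-sphere if and only if $X$ is a stacked $d$-sphere.
   Context: A simplicial complex is a finite set of finite sets closed under taking subsets; an element of size $i+1$ is an $i$-face (the empty set is the unique $(-1)$-face). A pure $d$-dimensional complex has all maximal faces (facets) of dimension $d$. The link of a face $\alpha$ is $\mathrm{lk}_X(\alpha)=\{\beta\in X:\beta\cap\alpha=\emptyset,\ \alpha\cup\beta\in X\}$. A $d$-dimensional normal pseudomanifold ($d\ge1$) is a pure $d$-dimensional simplicial complex in which every $(d-1)$-face lies in exactly two facets and the link of every face of dimension $\le d-2$ (including the empty face) is connected. If $\sigma$ is a facet of a pure $d$-dimensional complex $X$ and $v\notin V(X)$, starring $v$ in $\sigma$ gives the complex whose facets are the facets of $X$ other than $\sigma$ together with the sets $\tau\cup\{v\}$ for the $(d-1)$-faces $\tau\subset\sigma$. The standard $d$-sphere $S^d_{d+2}$ is the complex of all proper subsets of a $(d+2)$-set; a stacked $d$-sphere is a complex obtained from $S^d_{d+2}$ by finitely many starrings. *)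

theory Defs
  imports Main
begin

definition simplicial_complex :: "'a set set \<Rightarrow> bool" where
  "simplicial_complex X \<longleftrightarrow> finite X \<and> (\<forall>F\<in>X. finite F) \<and> (\<forall>F\<in>X. \<forall>G. G \<subseteq> F \<longrightarrow> G \<in> X)"

definition vertices :: "'a set set \<Rightarrow> 'a set" where
  "vertices X = \<Union>X"

definition facets :: "'a set set \<Rightarrow> 'a set set" where
  "facets X = {F \<in> X. \<forall>G\<in>X. F \<subseteq> G \<longrightarrow> G = F}"

definition pure_dim :: "nat \<Rightarrow> 'a set set \<Rightarrow> bool" where
  "pure_dim d X \<longleftrightarrow> simplicial_complex X \<and> (\<exists>F\<in>X. card F = d + 1)
     \<and> (\<forall>F\<in>facets X. card F = d + 1)"

definition link :: "'a set set \<Rightarrow> 'a set \<Rightarrow> 'a set set" where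
  "link X \<alpha> = {\<beta> \<in> X. \<beta> \<inter> \<alpha> = {} \<and> \<alpha> \<union> \<beta> \<in> X}"

definition edge_rel :: "'a set set \<Rightarrow> ('a \<times> 'a) set" where
  "edge_rel X = {(x, y). {x, y} \<in> X}"

definition connected_complex :: "'a set set \<Rightarrow> bool" where
  "connected_complex X \<longleftrightarrow> (\<forall>x\<in>vertices X. \<forall>y\<in>vertices X. (x, y) \<in> (edge_rel X)\<^sup>*)"

definition normal_pseudomanifold :: "nat \<Rightarrow> 'a set set \<Rightarrow> bool" where
  "normal_pseudomanifold d X \<longleftrightarrow> d \<ge> 1 \<and> pure_dim d X
     \<and> (\<forall>\<tau>\<in>X. card \<tau> = d \<longrightarrow> card {F \<in> facets X. \<tau> \<subseteq> F} = 2)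
     \<and> (\<forall>\<alpha>\<in>X. card \<alpha> \<le> d - 1 \<longrightarrow> connected_complex (link X \<alpha>))"

definition star_in :: "nat \<Rightarrow> 'a set set \<Rightarrow> 'a set \<Rightarrow> 'a \<Rightarrow> 'a set set" where
  "star_in d X \<sigma> v =
     {\<alpha>. \<exists>F \<in> (facets X - {\<sigma>}) \<union> {insert v \<tau> | \<tau>. \<tau> \<subseteq> \<sigma> \<and> card \<tau> = d}. \<alpha> \<subseteq> F}"

definition standard_sphere :: "nat \<Rightarrow> 'a set \<Rightarrow> 'a set set" where
  "standard_sphere d V = {A. A \<subset> V}"

inductive stacked_sphere :: "nat \<Rightarrow> 'a set set \<Rightarrow> bool" for d where
  base: "finite V \<Longrightarrow> card V = d + 2 \<Longrightarrow> stacked_sphere d (standard_sphere d V)"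
| step: "stacked_sphere d X \<Longrightarrow> \<sigma> \<in> facets X \<Longrightarrow> v \<notin> vertices X
          \<Longrightarrow> stacked_sphere d (star_in d X \<sigma> v)"

end

theory Submission
  imports Defs
begin

text \<open>
  Starring a new vertex into a facet of a stacked sphere gives a stacked sphere by definition, so
  the content is the converse: if starring \<open>w\<close> into the facet \<open>s\<close> of \<open>X\<close> gives a stacked
  sphere \<open>Z\<close>, then \<open>X\<close> is stacked. We induct on the stacking sequence of \<open>Z\<close>. The boundary
  of a simplex never arises by starring. Otherwise \<open>Z\<close> is also obtained by starring a vertex \<open>u\<close>
  into a facet \<open>t\<close> of a stacked sphere \<open>Y\<close>. If \<open>u = w\<close>, then \<open>X = Y\<close>, because a starring can
  be undone by deleting the new vertex and putting the facet back. If \<open>u \<noteq> w\<close>, comparing the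
  links of \<open>u\<close> and \<open>w\<close> in \<open>Z\<close> shows that either the two starrings commute, i.e.\ \<open>X\<close> and \<open>Y\<close>
  are starrings of a common complex which is stacked by induction, or \<open>Y\<close> is the boundary of a
  simplex and then so is \<open>X\<close>. The second case occurs when \<open>s = t\<close>, and in dimension one when the
  edges \<open>s\<close> and \<open>t\<close> are \<open>{u, a}\<close> and \<open>{w, b}\<close> and \<open>Y\<close> is the triangle on \<open>w, a, b\<close>.
\<close>

text \<open>The faces of \<open>star_in d X \<sigma> v\<close> listed explicitly, see \<open>star_in_eq_starring\<close>.\<close>

definition starring :: "'a set set \<Rightarrow> 'a set \<Rightarrow> 'a \<Rightarrow> 'a set set" where
  "starring X \<sigma> v = (X - {\<sigma>}) \<union> insert v ` (Pow \<sigma> - {\<sigma>})"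

lemma simplicial_complex_subset_closed:
  "simplicial_complex X \<Longrightarrow> F \<in> X \<Longrightarrow> G \<subseteq> F \<Longrightarrow> G \<in> X"
  unfolding simplicial_complex_def by blast

lemma simplicial_complex_finite_face:
  "simplicial_complex X \<Longrightarrow> F \<in> X \<Longrightarrow> finite F"
  unfolding simplicial_complex_def by blast

lemma simplicial_complexI:
  assumes "finite X" "\<And>F. F \<in> X \<Longrightarrow> finite F" "\<And>F G. F \<in> X \<Longrightarrow> G \<subseteq> F \<Longrightarrow> G \<in> X"
  shows "simplicial_complex X"
  using assms unfolding simplicial_complex_def by blast

lemma face_subset_facet:
  assumes X: "simplicial_complex X" and "\<alpha> \<in> X"
  obtains F where "F \<in> facets X" "\<alpha> \<subseteq> F"
proof -
  have "finite X" using X unfolding simplicial_complex_def by blast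
  from finite_has_maximal2[OF this \<open>\<alpha> \<in> X\<close>] obtain F
    where "F \<in> X" and "\<alpha> \<subseteq> F \<and> (\<forall>G\<in>X. F \<subseteq> G \<longrightarrow> F = G)" ..
  then have "F \<in> facets X" "\<alpha> \<subseteq> F" unfolding facets_def by auto
  then show thesis by (rule that)
qed

lemma standard_sphere_eq: "standard_sphere d V = Pow V - {V}"
  unfolding standard_sphere_def by blast

lemma vertex_notin_face: "v \<notin> vertices X \<Longrightarrow> \<alpha> \<in> X \<Longrightarrow> v \<notin> \<alpha>"
  unfolding vertices_def by blast

lemma obtain_card_between:
  assumes "finite \<sigma>" "card \<sigma> = Suc d" "\<beta> \<subset> \<sigma>"
  obtains \<tau> where "\<beta> \<subseteq> \<tau>" "\<tau> \<subset> \<sigma>" "card \<tau> = d"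
proof -
  have "card \<beta> \<le> d" using psubset_card_mono[OF assms(1,3)] assms(2) by simp
  moreover have "d \<le> card \<sigma>" using assms(2) by simp
  ultimately obtain \<tau> where \<tau>: "\<beta> \<subseteq> \<tau>" "\<tau> \<subseteq> \<sigma>" "card \<tau> = d"
    using exists_subset_between[of \<beta> d \<sigma>] assms(1,3) by blast
  moreover have "\<tau> \<noteq> \<sigma>" using \<tau>(3) assms(2) by auto
  ultimately show thesis using that by blast
qed

lemma mem_starring:
  assumes "v \<notin> \<sigma>"
  shows "\<alpha> \<in> starring X \<sigma> v \<longleftrightarrow> (\<alpha> \<in> X \<and> \<alpha> \<noteq> \<sigma>) \<or> (v \<in> \<alpha> \<and> \<alpha> - {v} \<subset> \<sigma>)"
proof -
  have "\<alpha> \<in> insert v ` (Pow \<sigma> - {\<sigma>}) \<longleftrightarrow> v \<in> \<alpha> \<and> \<alpha> - {v} \<subset> \<sigma>"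
  proof
    assume "v \<in> \<alpha> \<and> \<alpha> - {v} \<subset> \<sigma>"
    then show "\<alpha> \<in> insert v ` (Pow \<sigma> - {\<sigma>})"
      by (intro image_eqI[of _ _ "\<alpha> - {v}"]) auto
  qed (use assms in auto)
  then show ?thesis unfolding starring_def by blast
qed

lemma simplicial_complex_starring:
  assumes X: "simplicial_complex X" and \<sigma>: "\<sigma> \<in> facets X" and v: "v \<notin> vertices X"
  shows "simplicial_complex (starring X \<sigma> v)"
proof -
  have \<sigma>X: "\<sigma> \<in> X" using \<sigma> unfolding facets_def by blast
  have v\<sigma>: "v \<notin> \<sigma>" using vertex_notin_face[OF v \<sigma>X] .
  have fin: "finite \<sigma>" using simplicial_complex_finite_face[OF X \<sigma>X] .
  note mem = mem_starring[OF v\<sigma>, of _ X]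
  have "finite (starring X \<sigma> v)"
    using X fin unfolding simplicial_complex_def by (simp add: starring_def)
  moreover have "finite F \<and> (\<forall>G. G \<subseteq> F \<longrightarrow> G \<in> starring X \<sigma> v)"
    if F: "F \<in> starring X \<sigma> v" for F
  proof (cases "v \<in> F")
    case False
    then have "F \<in> X" "F \<noteq> \<sigma>" using F mem by simp_all
    moreover have "G \<noteq> \<sigma>" if "G \<subseteq> F" for G
      using \<open>F \<in> X\<close> \<open>F \<noteq> \<sigma>\<close> that \<sigma> unfolding facets_def by blast
    ultimately show ?thesis
      using simplicial_complex_finite_face[OF X] simplicial_complex_subset_closed[OF X] mem by simp
  next
    case True
    then have F\<sigma>: "F - {v} \<subset> \<sigma>" using F mem vertex_notin_face[OF v, of F] by auto
    then have "finite (F - {v})" using finite_subset[OF psubset_imp_subset fin] by blast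
    moreover have "G \<in> starring X \<sigma> v" if "G \<subseteq> F" for G
    proof (cases "v \<in> G")
      case True
      moreover have "G - {v} \<subset> \<sigma>" using F\<sigma> \<open>G \<subseteq> F\<close> by auto
      ultimately show ?thesis using mem by simp
    next
      case False
      then have "G \<subset> \<sigma>" using F\<sigma> \<open>G \<subseteq> F\<close> by auto
      then show ?thesis using simplicial_complex_subset_closed[OF X \<sigma>X, of G] mem by auto
    qed
    ultimately show ?thesis by simp
  qed
  ultimately show ?thesis unfolding simplicial_complex_def by blast
qed

lemma pure_dim_face_card_le:
  assumes "pure_dim d X" "F \<in> X"
  shows "card F \<le> d + 1"
proof -
  have X: "simplicial_complex X" using assms(1) unfolding pure_dim_def by blast
  obtain G where "G \<in> facets X" "F \<subseteq> G" using face_subset_facet[OF X assms(2)] .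
  moreover from this have "finite G"
    using simplicial_complex_finite_face[OF X] unfolding facets_def by blast
  moreover have "card G = d + 1" using assms(1) \<open>G \<in> facets X\<close> unfolding pure_dim_def by blast
  ultimately show ?thesis using card_mono[of G F] by simp
qed

lemma pure_dim_facets:
  assumes "pure_dim d X"
  shows "facets X = {F \<in> X. card F = d + 1}"
proof -
  have X: "simplicial_complex X" using assms unfolding pure_dim_def by blast
  have "F \<in> facets X" if "F \<in> X" "card F = d + 1" for F
  proof -
    have "G = F" if "G \<in> X" "F \<subseteq> G" for G
      using card_seteq[OF simplicial_complex_finite_face[OF X \<open>G \<in> X\<close>] \<open>F \<subseteq> G\<close>]
        pure_dim_face_card_le[OF assms \<open>G \<in> X\<close>] \<open>card F = d + 1\<close> by simp
    then show ?thesis using that unfolding facets_def by blast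
  qed
  moreover have "card F = d + 1" if "F \<in> facets X" for F
    using assms that unfolding pure_dim_def by blast
  moreover have "facets X \<subseteq> X" unfolding facets_def by blast
  ultimately show ?thesis by blast
qed

lemma pure_dimI:
  assumes "simplicial_complex X" "X \<noteq> {}"
    and "\<And>F. F \<in> X \<Longrightarrow> card F \<le> d + 1"
    and "\<And>F. F \<in> X \<Longrightarrow> \<exists>G\<in>X. F \<subseteq> G \<and> card G = d + 1"
  shows "pure_dim d X"
proof -
  have "card F = d + 1" if F: "F \<in> facets X" for F
  proof -
    obtain G where "G \<in> X" "F \<subseteq> G" "card G = d + 1"
      using F assms(4) unfolding facets_def by blast
    then show ?thesis using F unfolding facets_def by blast
  qed
  then show ?thesis using assms unfolding pure_dim_def by blast
qed

lemma starring_cone_facet: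
  assumes "finite \<sigma>" "card \<sigma> = Suc d" "v \<notin> \<sigma>" "\<beta> \<subset> \<sigma>"
  shows "\<exists>G\<in>starring X \<sigma> v. insert v \<beta> \<subseteq> G \<and> card G = d + 1"
proof -
  obtain \<tau> where "\<beta> \<subseteq> \<tau>" "\<tau> \<subset> \<sigma>" "card \<tau> = d"
    using obtain_card_between[OF assms(1,2,4)] .
  moreover have "v \<notin> \<tau>" "finite \<tau>" using \<open>\<tau> \<subset> \<sigma>\<close> assms(1,3) finite_subset by auto
  ultimately have "insert v \<tau> \<in> starring X \<sigma> v" "card (insert v \<tau>) = d + 1"
    using mem_starring[OF assms(3), of "insert v \<tau>" X] by simp_all
  then show ?thesis using \<open>\<beta> \<subseteq> \<tau>\<close> by blast
qed

lemma starring_card_le: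
  assumes "v \<notin> \<sigma>" "finite \<sigma>" "card \<sigma> = Suc d" "\<And>F. F \<in> X \<Longrightarrow> card F \<le> d + 1"
    and F: "F \<in> starring X \<sigma> v"
  shows "card F \<le> d + 1"
proof (cases "F \<in> X")
  case False
  then have "v \<in> F" and F\<sigma>: "F - {v} \<subset> \<sigma>" using F mem_starring[OF assms(1), of F X] by simp_all
  have "card (F - {v}) < card \<sigma>" using psubset_card_mono[OF assms(2) F\<sigma>] .
  moreover have "finite (F - {v})" using finite_subset[OF psubset_imp_subset[OF F\<sigma>] assms(2)] .
  then have "card F = Suc (card (F - {v}))" using card_Suc_Diff1[of F v] \<open>v \<in> F\<close> by simp
  ultimately show ?thesis using assms(3) by simp
qed (rule assms(4))

lemma pure_dim_starring:
  assumes X: "pure_dim d X" and \<sigma>: "\<sigma> \<in> facets X" and v: "v \<notin> vertices X"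
  shows "pure_dim d (starring X \<sigma> v)"
proof -
  have sc: "simplicial_complex X" using X unfolding pure_dim_def by blast
  have \<sigma>X: "\<sigma> \<in> X" and card_\<sigma>: "card \<sigma> = Suc d"
    using \<sigma> pure_dim_facets[OF X] by auto
  have v\<sigma>: "v \<notin> \<sigma>" using vertex_notin_face[OF v \<sigma>X] .
  have fin: "finite \<sigma>" using simplicial_complex_finite_face[OF sc \<sigma>X] .
  note mem = mem_starring[OF v\<sigma>, of _ X]
  note cone_extends = starring_cone_facet[OF fin card_\<sigma> v\<sigma>, where X = X]
  show ?thesis
  proof (rule pure_dimI)
    show "simplicial_complex (starring X \<sigma> v)"
      using simplicial_complex_starring[OF sc \<sigma> v] .
    have "{v} \<in> starring X \<sigma> v" using mem[of "{v}"] card_\<sigma> by auto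
    then show "starring X \<sigma> v \<noteq> {}" by blast
  next
    fix F assume F: "F \<in> starring X \<sigma> v"
    show "card F \<le> d + 1" using starring_card_le[OF v\<sigma> fin card_\<sigma> pure_dim_face_card_le[OF X] F] .
    show "\<exists>G\<in>starring X \<sigma> v. F \<subseteq> G \<and> card G = d + 1"
    proof (cases "v \<in> F")
      case True
      then have "F - {v} \<subset> \<sigma>" using F mem vertex_notin_face[OF v, of F] by auto
      then show ?thesis using cone_extends[of "F - {v}"] True by (metis insert_Diff)
    next
      case False
      then have "F \<in> X" "F \<noteq> \<sigma>" using F mem by simp_all
      obtain G where G: "G \<in> facets X" "F \<subseteq> G" by (rule face_subset_facet[OF sc \<open>F \<in> X\<close>])
      show ?thesis
      proof (cases "G = \<sigma>")
        case True
        then show ?thesis using cone_extends[of F] G \<open>F \<noteq> \<sigma>\<close> by blast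
      next
        case False
        then show ?thesis using G mem pure_dim_facets[OF X] by auto
      qed
    qed
  qed
qed

lemma mem_star_in:
  "\<alpha> \<in> star_in d X \<sigma> v \<longleftrightarrow>
    (\<exists>F\<in>facets X - {\<sigma>}. \<alpha> \<subseteq> F) \<or> (\<exists>\<tau>. \<tau> \<subseteq> \<sigma> \<and> card \<tau> = d \<and> \<alpha> \<subseteq> insert v \<tau>)"
  unfolding star_in_def by auto

lemma star_in_subset_starring:
  assumes X: "simplicial_complex X" and \<sigma>: "\<sigma> \<in> facets X" and card_\<sigma>: "card \<sigma> = d + 1"
    and v: "v \<notin> vertices X"
  shows "star_in d X \<sigma> v \<subseteq> starring X \<sigma> v"
proof
  fix \<alpha> assume "\<alpha> \<in> star_in d X \<sigma> v"
  then consider (facet) F where "F \<in> facets X" "F \<noteq> \<sigma>" "\<alpha> \<subseteq> F"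
    | (cone) \<tau> where "\<tau> \<subseteq> \<sigma>" "card \<tau> = d" "\<alpha> \<subseteq> insert v \<tau>"
    unfolding mem_star_in by blast
  moreover have \<sigma>X: "\<sigma> \<in> X" using \<sigma> unfolding facets_def by blast
  note mem = mem_starring[OF vertex_notin_face[OF v \<sigma>X], of \<alpha> X]
  ultimately show "\<alpha> \<in> starring X \<sigma> v"
  proof cases
    case facet
    have "F \<in> X" using facet(1) unfolding facets_def by blast
    have "\<alpha> \<noteq> \<sigma>"
    proof
      assume "\<alpha> = \<sigma>"
      then have "F = \<sigma>" using \<sigma> facet(3) \<open>F \<in> X\<close> unfolding facets_def by blast
      then show False using facet(2) by simp
    qed
    then show ?thesis using mem simplicial_complex_subset_closed[OF X \<open>F \<in> X\<close> facet(3)] by simp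
  next
    case cone
    have "\<tau> \<noteq> \<sigma>" using cone(2) card_\<sigma> by auto
    then have "\<alpha> - {v} \<subset> \<sigma>" using cone(1,3) by blast
    then show ?thesis using mem simplicial_complex_subset_closed[OF X \<sigma>X, of \<alpha>]
      by (cases "v \<in> \<alpha>") auto
  qed
qed

lemma starring_subset_star_in:
  assumes X: "simplicial_complex X" and \<sigma>: "\<sigma> \<in> facets X" and card_\<sigma>: "card \<sigma> = d + 1"
    and v: "v \<notin> vertices X"
  shows "starring X \<sigma> v \<subseteq> star_in d X \<sigma> v"
proof
  fix \<alpha> assume \<alpha>: "\<alpha> \<in> starring X \<sigma> v"
  have \<sigma>X: "\<sigma> \<in> X" using \<sigma> unfolding facets_def by blast
  have fin: "finite \<sigma>" using simplicial_complex_finite_face[OF X \<sigma>X] .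
  have cone: "\<alpha> \<in> star_in d X \<sigma> v" if \<alpha>\<sigma>: "\<alpha> - {v} \<subset> \<sigma>"
  proof -
    obtain \<tau> where "\<alpha> - {v} \<subseteq> \<tau>" "\<tau> \<subset> \<sigma>" "card \<tau> = d"
      using obtain_card_between[OF fin _ \<alpha>\<sigma>] card_\<sigma> by auto
    then have "\<tau> \<subseteq> \<sigma> \<and> card \<tau> = d \<and> \<alpha> \<subseteq> insert v \<tau>" by blast
    then show ?thesis unfolding mem_star_in by blast
  qed
  show "\<alpha> \<in> star_in d X \<sigma> v"
  proof (cases "\<alpha> \<in> X \<and> \<alpha> \<noteq> \<sigma>")
    case True
    obtain F where F: "F \<in> facets X" "\<alpha> \<subseteq> F" by (rule face_subset_facet[OF X conjunct1[OF True]])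
    show ?thesis
    proof (cases "F = \<sigma>")
      case True
      then have "\<alpha> - {v} \<subset> \<sigma>" using F(2) \<open>\<alpha> \<in> X \<and> \<alpha> \<noteq> \<sigma>\<close> by auto
      then show ?thesis by (rule cone)
    next
      case False
      then show ?thesis using F unfolding mem_star_in by blast
    qed
  next
    case False
    then have "\<alpha> - {v} \<subset> \<sigma>" using \<alpha> mem_starring[OF vertex_notin_face[OF v \<sigma>X], of \<alpha> X] by blast
    then show ?thesis by (rule cone)
  qed
qed

lemma star_in_eq_starring:
  assumes "simplicial_complex X" "\<sigma> \<in> facets X" "card \<sigma> = d + 1" "v \<notin> vertices X"
  shows "star_in d X \<sigma> v = starring X \<sigma> v"
  using star_in_subset_starring[OF assms] starring_subset_star_in[OF assms] by (rule equalityI)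

lemma pure_dim_standard_sphere:
  assumes "finite V" "card V = d + 2"
  shows "pure_dim d (standard_sphere d V)"
proof (rule pure_dimI)
  show "simplicial_complex (standard_sphere d V)"
    using assms(1) finite_subset unfolding simplicial_complex_def standard_sphere_eq by blast
  have "{} \<in> standard_sphere d V" using assms(2) by (auto simp: standard_sphere_eq)
  then show "standard_sphere d V \<noteq> {}" by auto
next
  fix F assume "F \<in> standard_sphere d V"
  then have "F \<subset> V" unfolding standard_sphere_eq by blast
  then have "card F < card V" using psubset_card_mono[OF assms(1)] by blast
  then show "card F \<le> d + 1" using assms(2) by simp
  obtain x where "x \<in> V" "x \<notin> F" using \<open>F \<subset> V\<close> by blast
  then have "V - {x} \<in> standard_sphere d V" "F \<subseteq> V - {x}" "card (V - {x}) = d + 1"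
    using \<open>F \<subset> V\<close> assms unfolding standard_sphere_eq by auto
  then show "\<exists>G\<in>standard_sphere d V. F \<subseteq> G \<and> card G = d + 1" by blast
qed

lemma stacked_sphere_pure_dim: "stacked_sphere d X \<Longrightarrow> pure_dim d X"
proof (induction rule: stacked_sphere.induct)
  case (base V)
  then show ?case using pure_dim_standard_sphere by blast
next
  case (step X \<sigma> v)
  have "card \<sigma> = d + 1" using step.hyps(2) pure_dim_facets[OF step.IH] by blast
  moreover have "simplicial_complex X" using step.IH unfolding pure_dim_def by blast
  ultimately show ?case
    using pure_dim_starring[OF step.IH step.hyps(2,3)] star_in_eq_starring step.hyps(2,3) by metis
qed

lemma stacked_sphere_starring:
  assumes X: "stacked_sphere d X" and "\<sigma> \<in> X" "card \<sigma> = d + 1" "v \<notin> vertices X"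
  shows "stacked_sphere d (starring X \<sigma> v)"
proof -
  have pure: "pure_dim d X" using stacked_sphere_pure_dim[OF X] .
  then have "\<sigma> \<in> facets X" "simplicial_complex X"
    using assms(2,3) pure_dim_facets unfolding pure_dim_def by blast+
  then show ?thesis
    using stacked_sphere.step[OF X _ assms(4)] star_in_eq_starring assms(3,4) by metis
qed

lemma stacked_sphere_induct[consumes 1, case_names standard starring]:
  assumes "stacked_sphere d Z"
    and "\<And>V. finite V \<Longrightarrow> card V = d + 2 \<Longrightarrow> P (standard_sphere d V)"
    and "\<And>X \<sigma> v. stacked_sphere d X \<Longrightarrow> P X \<Longrightarrow> \<sigma> \<in> X \<Longrightarrow> card \<sigma> = d + 1
          \<Longrightarrow> v \<notin> vertices X \<Longrightarrow> P (starring X \<sigma> v)"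
  shows "P Z"
  using assms(1)
proof (induction rule: stacked_sphere.induct)
  case (base V)
  then show ?case using assms(2) by blast
next
  case (step X \<sigma> v)
  have pure: "pure_dim d X" using stacked_sphere_pure_dim[OF step.hyps(1)] .
  then have "\<sigma> \<in> X" "card \<sigma> = d + 1" "simplicial_complex X"
    using step.hyps(2) pure_dim_facets unfolding pure_dim_def by blast+
  then show ?case
    using assms(3)[OF step.hyps(1) step.IH _ _ step.hyps(3)] star_in_eq_starring step.hyps(2,3)
      by metis
qed

lemma simplicial_complex_unstar:
  assumes Y: "simplicial_complex Y" and "finite \<sigma>"
  shows "simplicial_complex ({\<alpha> \<in> Y. v \<notin> \<alpha>} \<union> Pow \<sigma>)"
proof (rule simplicial_complexI)
  have "finite Y" using Y unfolding simplicial_complex_def by simp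
  then show "finite ({\<alpha> \<in> Y. v \<notin> \<alpha>} \<union> Pow \<sigma>)" using \<open>finite \<sigma>\<close> by simp
next
  fix F assume "F \<in> {\<alpha> \<in> Y. v \<notin> \<alpha>} \<union> Pow \<sigma>"
  then show "finite F"
    using simplicial_complex_finite_face[OF Y, of F] finite_subset[of F \<sigma>] \<open>finite \<sigma>\<close> by auto
next
  fix F G assume "F \<in> {\<alpha> \<in> Y. v \<notin> \<alpha>} \<union> Pow \<sigma>" "G \<subseteq> F"
  then show "G \<in> {\<alpha> \<in> Y. v \<notin> \<alpha>} \<union> Pow \<sigma>"
    using simplicial_complex_subset_closed[OF Y, of F G] by auto
qed

lemma unstar_starring:
  assumes X: "simplicial_complex X" and "\<sigma> \<in> X" and v: "v \<notin> vertices X"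
  shows "{\<alpha> \<in> starring X \<sigma> v. v \<notin> \<alpha>} \<union> Pow \<sigma> = X"
  using simplicial_complex_subset_closed[OF X \<open>\<sigma> \<in> X\<close>] vertex_notin_face[OF v]
  unfolding starring_def by blast

lemma starring_unstar:
  assumes Y: "simplicial_complex Y" and "v \<notin> \<sigma>" "\<sigma> \<notin> Y"
    and link: "\<And>\<alpha>. v \<in> \<alpha> \<Longrightarrow> \<alpha> \<in> Y \<longleftrightarrow> \<alpha> - {v} \<subset> \<sigma>"
  shows "starring ({\<alpha> \<in> Y. v \<notin> \<alpha>} \<union> Pow \<sigma>) \<sigma> v = Y"
proof (rule set_eqI)
  fix \<alpha>
  have "\<alpha> \<in> Y" if "\<alpha> \<subset> \<sigma>"
  proof -
    have "insert v \<alpha> \<in> Y" using link[of "insert v \<alpha>"] that \<open>v \<notin> \<sigma>\<close> by auto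
    then show ?thesis using simplicial_complex_subset_closed[OF Y] by blast
  qed
  then show "\<alpha> \<in> starring ({\<alpha> \<in> Y. v \<notin> \<alpha>} \<union> Pow \<sigma>) \<sigma> v \<longleftrightarrow> \<alpha> \<in> Y"
    using mem_starring[OF \<open>v \<notin> \<sigma>\<close>, of \<alpha> "{\<alpha> \<in> Y. v \<notin> \<alpha>} \<union> Pow \<sigma>"] link[of \<alpha>] \<open>v \<notin> \<sigma>\<close> \<open>\<sigma> \<notin> Y\<close>
      by blast
qed

lemma singleton_psubset: "2 \<le> card \<sigma> \<Longrightarrow> x \<in> \<sigma> \<Longrightarrow> {x} \<subset> \<sigma>"
  by (cases "\<sigma> = {x}") auto

lemma starring_face_subset:
  assumes eq: "starring A \<sigma> v = starring B \<tau> v"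
    and "\<sigma> \<in> A" "v \<notin> vertices A" "2 \<le> card \<sigma>" "\<tau> \<in> B" "v \<notin> vertices B"
  shows "\<sigma> \<subseteq> \<tau>"
proof
  fix x assume "x \<in> \<sigma>"
  have v\<sigma>: "v \<notin> \<sigma>" using vertex_notin_face[OF assms(3,2)] .
  have v\<tau>: "v \<notin> \<tau>" using vertex_notin_face[OF assms(6,5)] .
  have "{v, x} - {v} \<subset> \<sigma>" using singleton_psubset[OF assms(4) \<open>x \<in> \<sigma>\<close>] v\<sigma> \<open>x \<in> \<sigma>\<close> by auto
  then have "{v, x} \<in> starring B \<tau> v" using eq mem_starring[OF v\<sigma>, of "{v, x}" A] by simp
  moreover have "{v, x} \<notin> B" using vertex_notin_face[OF assms(6)] by blast
  ultimately have "{v, x} - {v} \<subset> \<tau>" using mem_starring[OF v\<tau>, of "{v, x}" B] by simp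
  then show "x \<in> \<tau>" using \<open>x \<in> \<sigma>\<close> v\<sigma> by auto
qed

lemma starring_cancel:
  assumes eq: "starring A \<sigma> v = starring B \<tau> v"
    and A: "simplicial_complex A" "\<sigma> \<in> A" "v \<notin> vertices A" "2 \<le> card \<sigma>"
    and B: "simplicial_complex B" "\<tau> \<in> B" "v \<notin> vertices B" "2 \<le> card \<tau>"
  shows "A = B"
proof -
  have "\<sigma> = \<tau>"
    using starring_face_subset[OF eq A(2-4) B(2,3)]
      starring_face_subset[OF eq[symmetric] B(2-4) A(2,3)]
    by (rule antisym)
  have "A = {\<alpha> \<in> starring A \<sigma> v. v \<notin> \<alpha>} \<union> Pow \<sigma>" using unstar_starring[OF A(1-3)] by simp
  also have "\<dots> = {\<alpha> \<in> starring B \<tau> v. v \<notin> \<alpha>} \<union> Pow \<tau>" using eq \<open>\<sigma> = \<tau>\<close> by simp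
  also have "\<dots> = B" using unstar_starring[OF B(1-3)] .
  finally show ?thesis .
qed

lemma starring_ne_standard_sphere:
  assumes X: "simplicial_complex X" "\<sigma> \<in> X" "2 \<le> card \<sigma>" "v \<notin> vertices X"
  shows "starring X \<sigma> v \<noteq> standard_sphere d V"
proof
  assume eq: "starring X \<sigma> v = standard_sphere d V"
  have v\<sigma>: "v \<notin> \<sigma>" using vertex_notin_face[OF X(4,2)] .
  note mem = mem_starring[OF v\<sigma>, of _ X]
  have "{x} \<in> starring X \<sigma> v" if "x \<in> insert v \<sigma>" for x
  proof (cases "x = v")
    case True
    have "\<sigma> \<noteq> {}" using X(3) by auto
    then show ?thesis using True mem[of "{x}"] by auto
  next
    case False
    then have "{x} \<subset> \<sigma>" using that singleton_psubset[OF X(3)] by simp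
    then show ?thesis using mem[of "{x}"] simplicial_complex_subset_closed[OF X(1,2), of "{x}"]
      by auto
  qed
  then have "insert v \<sigma> \<subseteq> V" using eq unfolding standard_sphere_eq by blast
  then have "\<sigma> \<in> standard_sphere d V" using v\<sigma> unfolding standard_sphere_eq by auto
  moreover have "\<sigma> \<notin> starring X \<sigma> v" using mem[of \<sigma>] v\<sigma> by simp
  ultimately show False using eq by simp
qed

lemma obtain_third_element:
  assumes "finite W" "3 \<le> card W"
  obtains x where "x \<in> W" "x \<noteq> u" "x \<noteq> y"
proof -
  have "card {u, y} \<le> 2" by (cases "u = y") auto
  then have "\<not> W \<subseteq> {u, y}" using card_mono[of "{u, y}" W] assms(2) by auto
  then show thesis using that by blast
qed

lemma stacked_sphere_eq_standard_sphere:
  assumes "stacked_sphere d Z" "1 \<le> d" "finite W" "card W = d + 2" "Pow W - {W} \<subseteq> Z"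
  shows "Z = standard_sphere d W"
  using assms
proof (induction rule: stacked_sphere_induct)
  case (standard V)
  have "W \<subseteq> V"
  proof
    fix x assume "x \<in> W"
    then have "{x} \<in> Pow W - {W}" using standard.prems(3) by auto
    then show "x \<in> V" using standard.prems(4) unfolding standard_sphere_eq by blast
  qed
  then have "W = V" using card_seteq[OF standard.hyps(1)] standard.hyps(2) standard.prems(3) by simp
  then show ?case by simp
next
  case (starring X \<tau> u)
  have u\<tau>: "u \<notin> \<tau>" using vertex_notin_face[OF starring.hyps(4,2)] .
  note mem = mem_starring[OF u\<tau>, of _ X]
  have \<tau>_notin: "\<tau> \<notin> starring X \<tau> u" using mem[of \<tau>] u\<tau> by simp
  show ?case
  proof (cases "u \<in> W")
    case False
    have "Pow W - {W} \<subseteq> X"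
    proof
      fix A assume "A \<in> Pow W - {W}"
      then have "A \<in> starring X \<tau> u" "u \<notin> A" using starring.prems(4) False by auto
      then show "A \<in> X" using mem[of A] by simp
    qed
    then have "X = standard_sphere d W" using starring.IH starring.prems(1-3) by blast
    then have "\<tau> \<in> Pow W - {W}" using starring.hyps(2) unfolding standard_sphere_eq by blast
    then show ?thesis using starring.prems(4) \<tau>_notin by blast
  next
    case True
    have "W - {u} \<subseteq> \<tau>"
    proof
      fix y assume y: "y \<in> W - {u}"
      obtain x where x: "x \<in> W" "x \<noteq> u" "x \<noteq> y"
        using obtain_third_element[OF starring.prems(2)] starring.prems(1,3) by auto
      then have "W - {x} \<in> starring X \<tau> u" using starring.prems(4) by blast
      moreover have "W - {x} \<notin> X" using vertex_notin_face[OF starring.hyps(4)] True x(2) by blast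
      ultimately have "W - {x} - {u} \<subset> \<tau>" using mem[of "W - {x}"] by simp
      then show "y \<in> \<tau>" using x y by blast
    qed
    moreover have "simplicial_complex X"
      using stacked_sphere_pure_dim[OF starring.hyps(1)] unfolding pure_dim_def by blast
    then have "finite \<tau>" using simplicial_complex_finite_face starring.hyps(2) by blast
    moreover have "card \<tau> \<le> card (W - {u})" using starring.hyps(3) starring.prems(3) True by simp
    ultimately have "W - {u} = \<tau>" by (intro card_seteq)
    moreover have "W - {u} \<in> starring X \<tau> u" using True starring.prems(4) by blast
    ultimately show ?thesis using \<tau>_notin by simp
  qed
qed

lemma psubset_insert_ne_iff:
  assumes "u \<notin> \<sigma>"
  shows "\<alpha> \<subseteq> insert u \<sigma> \<and> \<alpha> \<noteq> insert u \<sigma> \<and> \<alpha> \<noteq> \<sigma> \<longleftrightarrow> (if u \<in> \<alpha> then \<alpha> - {u} \<subset> \<sigma> else \<alpha> \<subset> \<sigma>)"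
  using assms by (auto simp: subset_insert_iff)

lemma starring_standard_sphere_swap:
  assumes "u \<notin> \<sigma>" "w \<notin> \<sigma>" "u \<noteq> w"
  shows "starring (standard_sphere d (insert w \<sigma>)) \<sigma> u =
      starring (standard_sphere d (insert u \<sigma>)) \<sigma> w"
proof (rule set_eqI)
  fix \<alpha>
  show "\<alpha> \<in> starring (standard_sphere d (insert w \<sigma>)) \<sigma> u \<longleftrightarrow>
      \<alpha> \<in> starring (standard_sphere d (insert u \<sigma>)) \<sigma> w"
    using psubset_insert_ne_iff[OF assms(1), of \<alpha>] psubset_insert_ne_iff[OF assms(2), of \<alpha>] assms
    unfolding mem_starring[OF assms(1)] mem_starring[OF assms(2)] standard_sphere_eq
    by (cases "u \<in> \<alpha>"; cases "w \<in> \<alpha>") auto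
qed

text \<open>
  The hypotheses are
  symmetric in \<open>(X, s, w)\<close> and \<open>(Y, t, u)\<close>; \<open>swap\<close> makes the mirror image of every lemma
  available as \<open>double_starring.lemma[OF swap]\<close>.
\<close>

locale double_starring =
  fixes d :: nat and X :: "'a set set" and s :: "'a set" and w :: 'a
    and Y :: "'a set set" and t :: "'a set" and u :: 'a
  assumes dim_pos: "1 \<le> d"
    and complex_X: "simplicial_complex X" and face_s: "s \<in> X" and card_s: "card s = d + 1"
    and fresh_w: "w \<notin> vertices X"
    and complex_Y: "simplicial_complex Y" and face_t: "t \<in> Y" and card_t: "card t = d + 1"
    and fresh_u: "u \<notin> vertices Y"
    and new_vertices_ne: "w \<noteq> u"
    and starring_eq: "starring X s w = starring Y t u"
begin

lemma swap: "double_starring d Y t u X s w"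
  using dim_pos complex_X face_s card_s fresh_w complex_Y face_t card_t fresh_u new_vertices_ne
    starring_eq by unfold_locales auto

lemma w_notin_s: "w \<notin> s"
  using vertex_notin_face[OF fresh_w face_s] .

lemma two_le_card_s: "2 \<le> card s"
  using card_s dim_pos by simp

lemma mem_starring_iff:
  "\<alpha> \<in> starring X s w \<longleftrightarrow> (\<alpha> \<in> X \<and> \<alpha> \<noteq> s) \<or> (w \<in> \<alpha> \<and> \<alpha> - {w} \<subset> s)"
  using mem_starring[OF w_notin_s] .

lemma face_s_notin_Y:
  assumes "s \<noteq> t"
  shows "s \<notin> Y"
proof -
  have "s \<notin> starring Y t u" using starring_eq mem_starring_iff[of s] w_notin_s by simp
  then show ?thesis using double_starring.mem_starring_iff[OF swap, of s] assms by auto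
qed

lemma mem_iff_avoiding:
  assumes "w \<notin> \<alpha>" "u \<notin> \<alpha>" "\<alpha> \<noteq> s" "\<alpha> \<noteq> t"
  shows "\<alpha> \<in> X \<longleftrightarrow> \<alpha> \<in> Y"
proof -
  have "\<alpha> \<in> X \<longleftrightarrow> \<alpha> \<in> starring X s w" using mem_starring_iff[of \<alpha>] assms by simp
  also have "\<dots> \<longleftrightarrow> \<alpha> \<in> starring Y t u" using starring_eq by simp
  also have "\<dots> \<longleftrightarrow> \<alpha> \<in> Y" using double_starring.mem_starring_iff[OF swap, of \<alpha>] assms by simp
  finally show ?thesis .
qed

lemma mem_iff_containing_u:
  assumes "u \<in> \<alpha>" "u \<notin> s"
  shows "\<alpha> \<in> X \<longleftrightarrow> \<alpha> - {u} \<subset> t"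
proof -
  have "\<alpha> \<in> X \<longleftrightarrow> \<alpha> \<in> starring X s w"
    using mem_starring_iff[of \<alpha>] assms vertex_notin_face[OF fresh_w, of \<alpha>] new_vertices_ne by auto
  also have "\<dots> \<longleftrightarrow> \<alpha> \<in> starring Y t u" using starring_eq by simp
  also have "\<dots> \<longleftrightarrow> \<alpha> - {u} \<subset> t"
    using double_starring.mem_starring_iff[OF swap, of \<alpha>] assms(1)
      vertex_notin_face[OF fresh_u, of \<alpha>]
    by auto
  finally show ?thesis .
qed

lemma w_in_t_if_u_in_s:
  assumes "u \<in> s"
  shows "w \<in> t"
proof -
  have "{w, u} - {w} \<subset> s"
    using assms singleton_psubset[OF two_le_card_s] new_vertices_ne by auto
  then have "{w, u} \<in> starring Y t u" using starring_eq mem_starring_iff[of "{w, u}"] by simp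
  moreover have "{w, u} \<notin> Y" using vertex_notin_face[OF fresh_u] by blast
  ultimately have "{w, u} - {u} \<subset> t" using double_starring.mem_starring_iff[OF swap, of "{w, u}"]
    by simp
  then show ?thesis using new_vertices_ne by auto
qed

lemma u_in_s_iff: "u \<in> s \<longleftrightarrow> w \<in> t"
  using w_in_t_if_u_in_s double_starring.w_in_t_if_u_in_s[OF swap] by blast

lemma faces_avoiding_w:
  "{\<alpha> \<in> Y. w \<notin> \<alpha>} = {\<alpha> \<in> starring X s w. u \<notin> \<alpha> \<and> w \<notin> \<alpha>} \<union> {\<alpha>. \<alpha> \<subseteq> t \<and> w \<notin> \<alpha>}"
proof (rule set_eqI)
  fix \<alpha>
  show "\<alpha> \<in> {\<alpha> \<in> Y. w \<notin> \<alpha>} \<longleftrightarrow>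
    \<alpha> \<in> {\<alpha> \<in> starring X s w. u \<notin> \<alpha> \<and> w \<notin> \<alpha>} \<union> {\<alpha>. \<alpha> \<subseteq> t \<and> w \<notin> \<alpha>}"
    using starring_eq double_starring.mem_starring_iff[OF swap, of \<alpha>]
      simplicial_complex_subset_closed[OF complex_Y face_t, of \<alpha>]
      vertex_notin_face[OF fresh_u, of \<alpha>]
    by auto
qed

lemma disjoint_common_base:
  assumes "s \<noteq> t" "u \<notin> s"
  defines "B \<equiv> {\<alpha> \<in> Y. w \<notin> \<alpha>} \<union> Pow s"
  shows "Y = starring B s w" "X = starring B t u"
proof -
  have "w \<notin> t" using assms(2) u_in_s_iff by blast
  have "starring B s w = Y"
    unfolding B_def
    using starring_unstar[OF complex_Y w_notin_s face_s_notin_Y[OF assms(1)]]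
      double_starring.mem_iff_containing_u[OF swap _ \<open>w \<notin> t\<close>] by blast
  then show "Y = starring B s w" ..
  have "B = {\<alpha> \<in> X. u \<notin> \<alpha>} \<union> Pow t"
    using faces_avoiding_w double_starring.faces_avoiding_w[OF swap] starring_eq assms(2) \<open>w \<notin> t\<close>
    unfolding B_def by auto
  then have "starring B t u = X"
    using starring_unstar[OF complex_X double_starring.w_notin_s[OF swap]
        double_starring.face_s_notin_Y[OF swap assms(1)[symmetric]]]
      mem_iff_containing_u[OF _ assms(2)] by simp
  then show "X = starring B t u" ..
qed

lemma same_face_sphere_faces:
  assumes "s = t"
  shows "Pow (insert w s) - {insert w s} \<subseteq> Y"
proof
  fix \<alpha> assume \<alpha>: "\<alpha> \<in> Pow (insert w s) - {insert w s}"
  have "u \<notin> \<alpha>" using \<alpha> assms double_starring.w_notin_s[OF swap] new_vertices_ne by auto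
  show "\<alpha> \<in> Y"
  proof (cases "w \<in> \<alpha>")
    case True
    then have "\<alpha> - {w} \<subset> s" using \<alpha> w_notin_s by auto
    then have "\<alpha> \<in> starring Y t u" using starring_eq mem_starring_iff[of \<alpha>] True by simp
    then show ?thesis using double_starring.mem_starring_iff[OF swap, of \<alpha>] \<open>u \<notin> \<alpha>\<close> by simp
  next
    case False
    then have "\<alpha> \<subseteq> t" using \<alpha> assms by auto
    then show ?thesis using simplicial_complex_subset_closed[OF complex_Y face_t] by blast
  qed
qed

lemma same_face_standard_sphere:
  assumes "s = t" "Y = standard_sphere d (insert w s)"
  shows "X = standard_sphere d (insert u s)"
proof -
  have "u \<notin> s" using assms(1) double_starring.w_notin_s[OF swap] by simp
  let ?S = "standard_sphere d (insert u s)"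
  have "starring X s w = starring ?S s w"
    using starring_eq assms
      starring_standard_sphere_swap[OF \<open>u \<notin> s\<close> w_notin_s new_vertices_ne[symmetric]]
    by simp
  moreover have "simplicial_complex ?S"
    using pure_dim_standard_sphere[of "insert u s" d]
      simplicial_complex_finite_face[OF complex_X face_s]
      \<open>u \<notin> s\<close> card_s unfolding pure_dim_def by simp
  moreover have "s \<in> ?S" "w \<notin> vertices ?S"
    using \<open>u \<notin> s\<close> w_notin_s new_vertices_ne unfolding standard_sphere_eq vertices_def by auto
  ultimately show ?thesis
    using starring_cancel[OF _ complex_X face_s fresh_w two_le_card_s] two_le_card_s by blast
qed

lemma same_face_stacked_sphere:
  assumes "s = t" "stacked_sphere d Y"
  shows "stacked_sphere d X"
proof -
  have fin_s: "finite s" using simplicial_complex_finite_face[OF complex_X face_s] .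
  have "Y = standard_sphere d (insert w s)"
    using stacked_sphere_eq_standard_sphere[OF assms(2) dim_pos _ _
        same_face_sphere_faces[OF assms(1)]]
      fin_s w_notin_s card_s by simp
  then have "X = standard_sphere d (insert u s)" by (rule same_face_standard_sphere[OF assms(1)])
  then show ?thesis
    using stacked_sphere.base[of "insert u s" d] fin_s card_s assms(1)
      double_starring.w_notin_s[OF swap]
    by simp
qed

lemma crossing_dim_one:
  assumes "u \<in> s"
  shows "d = 1"
proof (rule ccontr)
  assume "d \<noteq> 1"
  have fin_s: "finite s" using simplicial_complex_finite_face[OF complex_X face_s] .
  have "s - {u} \<subseteq> t"
  proof
    fix y assume y: "y \<in> s - {u}"
    obtain z where z: "z \<in> s" "z \<noteq> u" "z \<noteq> y"
      using obtain_third_element[OF fin_s] card_s dim_pos \<open>d \<noteq> 1\<close> by auto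
    let ?\<alpha> = "insert w (s - {z})"
    have "?\<alpha> - {w} \<subset> s" using z w_notin_s by auto
    then have "?\<alpha> \<in> starring Y t u" using starring_eq mem_starring_iff[of ?\<alpha>] by simp
    moreover have "?\<alpha> \<notin> Y" using vertex_notin_face[OF fresh_u] assms z(2) by blast
    ultimately have "?\<alpha> - {u} \<subset> t" using double_starring.mem_starring_iff[OF swap, of ?\<alpha>] by simp
    then show "y \<in> t" using y z by blast
  qed
  moreover have "card (s - {u}) \<noteq> card t" using card_s card_t assms by simp
  ultimately have "s - {u} \<subset> t" by auto
  then have "s \<in> starring Y t u" using double_starring.mem_starring_iff[OF swap, of s] assms by simp
  then show False using starring_eq mem_starring_iff[of s] w_notin_s by simp
qed

lemma crossing_faces:
  assumes "u \<in> s"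
  obtains a b where "s = {u, a}" "t = {w, b}" "distinct [u, w, a, b]"
proof -
  have "w \<in> t" using assms u_in_s_iff by blast
  have "card (s - {u}) = 1" "card (t - {w}) = 1"
    using crossing_dim_one[OF assms] card_s card_t assms \<open>w \<in> t\<close> by simp_all
  then obtain a b where ab: "s - {u} = {a}" "t - {w} = {b}" by (meson card_1_singletonE)
  then have st: "s = {u, a}" "t = {w, b}" using assms \<open>w \<in> t\<close> by auto
  have "a \<noteq> b"
  proof
    assume "a = b"
    then have "s - {u} \<subset> t" using ab st new_vertices_ne by auto
    then have "s \<in> starring Y t u" using double_starring.mem_starring_iff[OF swap, of s] assms
      by simp
    then show False using starring_eq mem_starring_iff[of s] w_notin_s by simp
  qed
  then have "distinct [u, w, a, b]"
    using ab st w_notin_s double_starring.w_notin_s[OF swap] new_vertices_ne by auto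
  then show thesis using that st by blast
qed

lemma crossing_edge:
  assumes "s = {u, a}" "t = {w, b}" "distinct [u, w, a, b]"
  shows "{w, a} \<in> Y"
proof -
  have "{w, a} \<in> starring X s w" using mem_starring_iff[of "{w, a}"] assms by auto
  then have "{w, a} \<in> starring Y t u" using starring_eq by simp
  then show ?thesis using double_starring.mem_starring_iff[OF swap, of "{w, a}"] assms(3) by auto
qed

lemma crossing_link:
  assumes "s = {u, a}" "t = {w, b}" "distinct [u, w, a, b]" "w \<in> \<alpha>"
  shows "\<alpha> \<in> Y \<longleftrightarrow> \<alpha> - {w} \<subset> {a, b}"
proof
  assume \<alpha>Y: "\<alpha> \<in> Y"
  have "u \<notin> \<alpha>" using vertex_notin_face[OF fresh_u \<alpha>Y] .
  show "\<alpha> - {w} \<subset> {a, b}"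
  proof (cases "\<alpha> = t")
    case True
    then show ?thesis using assms by auto
  next
    case False
    then have "\<alpha> \<in> starring X s w"
      using starring_eq double_starring.mem_starring_iff[OF swap, of \<alpha>] \<alpha>Y by simp
    moreover have "\<alpha> \<notin> X" using vertex_notin_face[OF fresh_w] assms(4) by blast
    ultimately have "\<alpha> - {w} \<subset> {u, a}" using mem_starring_iff[of \<alpha>] assms(1) by simp
    then show ?thesis using \<open>u \<notin> \<alpha>\<close> assms(3) by auto
  qed
next
  assume "\<alpha> - {w} \<subset> {a, b}"
  then have "\<alpha> \<subseteq> {w, a} \<or> \<alpha> \<subseteq> t" using assms by auto
  then show "\<alpha> \<in> Y"
    using simplicial_complex_subset_closed[OF complex_Y] crossing_edge[OF assms(1-3)] face_t
      by blast
qed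

lemma crossing_triangle_faces:
  assumes "s = {u, a}" "t = {w, b}" "distinct [u, w, a, b]" "{a, b} \<in> Y"
  shows "Pow {w, a, b} - {{w, a, b}} \<subseteq> Y"
proof
  fix \<alpha> assume "\<alpha> \<in> Pow {w, a, b} - {{w, a, b}}"
  then have "\<alpha> \<subseteq> {w, a} \<or> \<alpha> \<subseteq> t \<or> \<alpha> \<subseteq> {a, b}" using assms(2) by auto
  then show "\<alpha> \<in> Y"
    using simplicial_complex_subset_closed[OF complex_Y] crossing_edge[OF assms(1-3)] face_t
      assms(4)
    by blast
qed

lemma crossing_triangle_standard_sphere:
  assumes "s = {u, a}" "t = {w, b}" "distinct [u, w, a, b]" "Y = standard_sphere d {w, a, b}"
  shows "X = standard_sphere d {u, a, b}"
proof (rule set_eqI)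
  fix \<alpha>
  show "\<alpha> \<in> X \<longleftrightarrow> \<alpha> \<in> standard_sphere d {u, a, b}"
  proof
    assume \<alpha>X: "\<alpha> \<in> X"
    have "\<alpha> \<subseteq> {u, a} \<or> \<alpha> \<subseteq> {u, b} \<or> \<alpha> \<subseteq> {a, b}"
    proof (cases "\<alpha> = s")
      case False
      have "w \<notin> \<alpha>" using vertex_notin_face[OF fresh_w \<alpha>X] .
      have "\<alpha> \<in> starring Y t u" using starring_eq mem_starring_iff[of \<alpha>] \<alpha>X False by simp
      then have "\<alpha> \<subset> {w, a, b} \<or> \<alpha> - {u} \<subset> {w, b}"
        using double_starring.mem_starring_iff[OF swap, of \<alpha>] assms(2,4)
        unfolding standard_sphere_eq by auto
      then show ?thesis using \<open>w \<notin> \<alpha>\<close> by auto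
    qed (use assms(1) in simp)
    then show "\<alpha> \<in> standard_sphere d {u, a, b}"
      using assms(3) unfolding standard_sphere_eq by auto
  next
    assume "\<alpha> \<in> standard_sphere d {u, a, b}"
    then have "\<alpha> \<subseteq> {u, a} \<or> \<alpha> \<subseteq> {u, b} \<or> \<alpha> \<subseteq> {a, b}"
      unfolding standard_sphere_eq by auto
    moreover have "distinct [w, u, b, a]" using assms(3) by auto
    then have "{u, b} \<in> X"
      using double_starring.crossing_edge[OF swap assms(2,1)] by (simp add: insert_commute)
    moreover have "{a, b} \<in> X"
      using mem_iff_avoiding[of "{a, b}"] assms unfolding standard_sphere_eq by auto
    ultimately show "\<alpha> \<in> X"
      using simplicial_complex_subset_closed[OF complex_X] face_s assms(1) by blast
  qed
qed

lemma crossing_triangle_stacked_sphere: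
  assumes "s = {u, a}" "t = {w, b}" "distinct [u, w, a, b]" "{a, b} \<in> Y" "stacked_sphere d Y"
  shows "stacked_sphere d X"
proof -
  have "d = 1" using crossing_dim_one assms(1) by simp
  then have "Y = standard_sphere d {w, a, b}"
    using stacked_sphere_eq_standard_sphere[OF assms(5) dim_pos _ _
        crossing_triangle_faces[OF assms(1-4)]]
      assms(3) by simp
  then have "X = standard_sphere d {u, a, b}"
    by (rule crossing_triangle_standard_sphere[OF assms(1-3)])
  then show ?thesis using stacked_sphere.base[of "{u, a, b}" d] assms(3) \<open>d = 1\<close> by simp
qed

lemma crossing_common_base:
  assumes "s = {u, a}" "t = {w, b}" "distinct [u, w, a, b]" "{a, b} \<notin> Y"
  defines "B \<equiv> {\<alpha> \<in> Y. w \<notin> \<alpha>} \<union> Pow {a, b}"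
  shows "Y = starring B {a, b} w" "X = starring B {a, b} u"
proof -
  have "starring B {a, b} w = Y"
    unfolding B_def
    using starring_unstar[OF complex_Y _ assms(4)] crossing_link[OF assms(1-3)] assms(3)
    by simp
  then show "Y = starring B {a, b} w" ..
  have "{a, b} \<notin> X" using mem_iff_avoiding[of "{a, b}"] assms by auto
  moreover have "B = {\<alpha> \<in> X. u \<notin> \<alpha>} \<union> Pow {a, b}"
    using faces_avoiding_w double_starring.faces_avoiding_w[OF swap] starring_eq assms(1-3)
    unfolding B_def by auto
  moreover have "distinct [w, u, b, a]" using assms(3) by auto
  ultimately have "starring B {a, b} u = X"
    using starring_unstar[OF complex_X, of u "{a, b}"]
      double_starring.crossing_link[OF swap assms(2,1)] by (simp add: insert_commute)
  then show "X = starring B {a, b} u" ..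
qed

lemma unstar_base:
  assumes "w \<notin> \<rho>" "u \<notin> \<rho>" "finite \<rho>"
  shows "simplicial_complex ({\<alpha> \<in> Y. w \<notin> \<alpha>} \<union> Pow \<rho>)"
    and "w \<notin> vertices ({\<alpha> \<in> Y. w \<notin> \<alpha>} \<union> Pow \<rho>)"
    and "u \<notin> vertices ({\<alpha> \<in> Y. w \<notin> \<alpha>} \<union> Pow \<rho>)"
  using simplicial_complex_unstar[OF complex_Y assms(3)] assms vertex_notin_face[OF fresh_u]
  unfolding vertices_def by auto

lemma stacked_sphere_transfer:
  assumes Y: "stacked_sphere d Y"
    and IH: "\<And>B \<rho>. Y = starring B \<rho> w \<Longrightarrow> simplicial_complex B \<Longrightarrow> \<rho> \<in> B \<Longrightarrow> card \<rho> = d + 1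
      \<Longrightarrow> w \<notin> vertices B \<Longrightarrow> stacked_sphere d B"
  shows "stacked_sphere d X"
proof -
  consider (same_face) "s = t" | (disjoint) "s \<noteq> t" "u \<notin> s"
    | (crossing) a b where "s = {u, a}" "t = {w, b}" "distinct [u, w, a, b]"
    using crossing_faces by blast
  then show ?thesis
  proof cases
    case same_face
    then show ?thesis using same_face_stacked_sphere Y by blast
  next
    case disjoint
    have fin_s: "finite s" using simplicial_complex_finite_face[OF complex_X face_s] .
    note base = unstar_base[OF w_notin_s disjoint(2) fin_s]
    note eq = disjoint_common_base[OF disjoint]
    have "stacked_sphere d ({\<alpha> \<in> Y. w \<notin> \<alpha>} \<union> Pow s)" using IH[OF eq(1) base(1) _ card_s base(2)]
      by blast
    moreover have "t \<in> {\<alpha> \<in> Y. w \<notin> \<alpha>} \<union> Pow s" using face_t disjoint(2) u_in_s_iff by blast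
    ultimately show ?thesis using stacked_sphere_starring[of d _ t u] base(3) eq(2) card_t by simp
  next
    case crossing
    show ?thesis
    proof (cases "{a, b} \<in> Y")
      case True
      then show ?thesis using crossing_triangle_stacked_sphere[OF crossing _ Y] by blast
    next
      case False
      have "d = 1" using crossing_dim_one crossing(1) by simp
      then have "w \<notin> {a, b}" "u \<notin> {a, b}" "finite {a, b}" "card {a, b} = d + 1"
        using crossing(3) by auto
      note base = unstar_base[OF this(1-3)] and eq = crossing_common_base[OF crossing False]
      have "stacked_sphere d ({\<alpha> \<in> Y. w \<notin> \<alpha>} \<union> Pow {a, b})"
        using IH[OF eq(1) base(1) _ \<open>card {a, b} = d + 1\<close> base(2)] by blast
      then show ?thesis
        using stacked_sphere_starring[of d _ "{a, b}" u] base(3) eq(2) \<open>card {a, b} = d + 1\<close> by simp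
    qed
  qed
qed

end

lemma stacked_sphere_unstarring:
  assumes "stacked_sphere d (starring X \<sigma> v)" "1 \<le> d"
    and "simplicial_complex X" "\<sigma> \<in> X" "card \<sigma> = d + 1" "v \<notin> vertices X"
  shows "stacked_sphere d X"
proof -
  have "stacked_sphere d X"
    if "stacked_sphere d Z" "Z = starring X \<sigma> v" "simplicial_complex X" "\<sigma> \<in> X" "card \<sigma> = d + 1"
      "v \<notin> vertices X" for Z X \<sigma> v
    using that
  proof (induction arbitrary: X \<sigma> v rule: stacked_sphere_induct)
    case (standard V)
    have "2 \<le> card \<sigma>" using standard.prems(4) assms(2) by simp
    then show ?case
      using starring_ne_standard_sphere[OF standard.prems(2,3) _ standard.prems(5), of d V]
        standard.prems(1)
      by simp
  next
    case (starring Y t u X s w)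
    have Y: "simplicial_complex Y"
      using stacked_sphere_pure_dim[OF starring.hyps(1)] unfolding pure_dim_def by blast
    show ?case
    proof (cases "w = u")
      case True
      then have "Y = X"
        using starring_cancel[OF starring.prems(1)[folded True] Y starring.hyps(2)
            starring.hyps(4)[folded True] _ starring.prems(2-3,5)]
          starring.hyps(3) starring.prems(4) assms(2)
        by simp
      then show ?thesis using starring.hyps(1) by simp
    next
      case False
      interpret double_starring d X s w Y t u
        using assms(2) starring.prems Y starring.hyps(2-4) False by unfold_locales simp_all
      show ?thesis
      proof (rule stacked_sphere_transfer[OF starring.hyps(1)])
        fix B \<rho> assume "Y = starring B \<rho> w" "simplicial_complex B" "\<rho> \<in> B" "card \<rho> = d + 1"
          "w \<notin> vertices B"
        then show "stacked_sphere d B" by (rule starring.IH)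
      qed
    qed
  qed
  from this[OF assms(1) refl assms(3-6)] show ?thesis .
qed

theorem lemma4p6:
  fixes X Y :: "'a set set" and \<sigma> :: "'a set" and v :: 'a and d :: nat
  assumes "normal_pseudomanifold d X"
    and "normal_pseudomanifold d Y"
    and "\<sigma> \<in> facets X"
    and "v \<notin> vertices X"
    and "Y = star_in d X \<sigma> v"
  shows "stacked_sphere d Y \<longleftrightarrow> stacked_sphere d X"
proof -
  have "1 \<le> d" and pure: "pure_dim d X" using assms(1) unfolding normal_pseudomanifold_def by blast+
  have X: "simplicial_complex X" using pure unfolding pure_dim_def by blast
  have "\<sigma> \<in> X" "card \<sigma> = d + 1" using assms(3) pure_dim_facets[OF pure] by auto
  have Y: "Y = starring X \<sigma> v"
    using star_in_eq_starring[OF X assms(3) \<open>card \<sigma> = d + 1\<close> assms(4)] assms(5) by simp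
  show ?thesis
  proof
    assume "stacked_sphere d Y"
    then show "stacked_sphere d X"
      using stacked_sphere_unstarring[OF _ \<open>1 \<le> d\<close> X \<open>\<sigma> \<in> X\<close> \<open>card \<sigma> = d + 1\<close> assms(4)] Y by simp
  next
    assume "stacked_sphere d X"
    then show "stacked_sphere d Y" using stacked_sphere.step[OF _ assms(3,4)] assms(5) by simp
  qed
qed

end
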